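(* Let $(u_k)_{k\ge1}$ be defined by $u_k=k$ for $k\in\{1,2,3\}$ and $u_k=2u_{k-2}$ for $k\ge4$. For $k\ge1$, let $\omega_k$ be the largest integer such that every error $\mathbf{e}\in\mathbb{F}_2^{E_k}$ of Hamming weight at most $\omega_k$ is decoded correctly by the renormalisation decoder on $\mathbf{T}_k$. Then $\omega_k\le u_k-1$ for all $k\ge1$.
   Context: Toric code and decoding. Fix $k\ge1$. Let $\mathbf{T}_k=(V_k,E_k)$ be the Cayley graph of $\mathbb{Z}/2^k\mathbb{Z}\times\mathbb{Z}/2^k\mathbb{Z}$ with generators $(\pm1,0),(0,\pm1)$. An error is $\mathbf{e}\in\mathbb{F}_2^{E_k}$; its syndrome $\sigma(\mathbf{e})$ is the set of vertices incident to an odd number of edges of $\mathbf{e}$. The decoder outputs $\hat{\mathbf{e}}$ with $\sigma(\hat{\mathbf{e}})=\sigma(\mathbf{e})$; $\mathbf{e}$ is decoded correctly if $\mathbf{e}+\hat{\mathbf{e}}$ is a sum (mod 2) of faces (unit 4-cycles) of $\mathbf{T}_k$. Subtilings. For $0\le i\le k$ let $h_i=2^{k-i}$, $V_i$ the subgroup generated by $(h_i,0),(0,h_i)$, and $\mathbf{T}_i$ the graph on $V_i$ joining vertices differing by $\pm h_i$ in exactly one coordinate; an edge of $\mathbf{T}_i$ is identified with the straight path of length $h_i$ in $\mathbf{T}_k$, and flipping it means adding that path mod 2. For $i\ge1$, a cell of $\mathbf{T}_i$ is a face with vertices $\alpha=(x,y)$ (top-left), $\beta=(x+h_i,y)$,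 $\gamma=(x,y-h_i)$, $\delta=(x+h_i,y-h_i)$ and edges $t=\alpha\beta$, $b=\gamma\delta$, $l=\alpha\gamma$, $r=\beta\delta$; a block of $\mathbf{T}_i$ is a square of side $2h_i$ with top-left corner in $V_{i-1}$, made of cells $A$ (top-left), $B$ (top-right), $C$ (bottom-left), $D$ (bottom-right). Reduction procedure on $\mathbf{T}_i$ (input $S\subseteq V_i$, output $\hat{\mathbf{e}}_i$ initially $0$; in each step tests use $S$ as at the start of the step, all blocks simultaneously). Step 1: in the $D$ cell of each block, if $\alpha,\delta\in S$ flip $l,b$; if $\beta,\gamma\in S$ flip $b,r$ (if all four are in $S$ only $l,r$ are flipped); remove paired vertices from $S$. Step 2: in the $C$ cell of each block, if $\alpha,\gamma\in S$ flip $l$, if $\beta,\delta\in S$ flip $r$; in the $B$ cell of each block, if $\alpha,\beta\in S$ flip $t$, if $\gamma,\delta\in S$ flip $b$; remove paired vertices. Step 3: in the $A$ cell of each block, if $\beta\in S$ flip $t$, if $\gamma\in S$ flip $l$, if $\delta\in S$ flip $l$ and $b$. Renormalisation decoder: $\hat{\mathbf{e}}=0$, $S=\sigma(\mathbf{e})$, $i=k$; while $S\ne\emptyset$ and $i>0$: run the reduction procedure on $\mathbf{T}_i$ to get $\hat{\mathbf{e}}_i$; $\hat{\mathbf{e}}\gets\hat{\mathbf{e}}+\hat{\mathbf{e}}_i$; $S\gets S\triangle\sigma(\hat{\mathbf{e}}_i)$; $i\gets i-1$. Output $\hat{\mathbf{e}}$. *)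

theory Defs
  imports Main
begin

text \<open>The paper's orientation is used: beta = alpha + (h,0), gamma = alpha - (0,h).
  An edge is a pair (v, d): for d = False it is the horizontal edge joining
  v = (x,y) to (x+1,y); for d = True the vertical edge joining (x,y) to (x,y+1)
  (coordinates mod N).  This is the standard cellulation of the torus with
  2 N^2 edges and N^2 faces.\<close>

type_synonym vtx = "int \<times> int"
type_synonym edge = "vtx \<times> bool"

definition symd :: "'a set \<Rightarrow> 'a set \<Rightarrow> 'a set" where
  "symd A B = (A - B) \<union> (B - A)"

definition vert :: "nat \<Rightarrow> int \<Rightarrow> int \<Rightarrow> vtx" where
  "vert k a b = (a mod 2^k, b mod 2^k)"

definition verts :: "nat \<Rightarrow> vtx set" where
  "verts k = {(x, y). 0 \<le> x \<and> x < 2^k \<and> 0 \<le> y \<and> y < 2^k}"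

definition edges :: "nat \<Rightarrow> edge set" where
  "edges k = {(v, d). v \<in> verts k}"

definition ends :: "nat \<Rightarrow> edge \<Rightarrow> vtx set" where
  "ends k ed = (case ed of ((x, y), d) \<Rightarrow>
      {(x, y), (if d then vert k x (y + 1) else vert k (x + 1) y)})"

definition syndrome :: "nat \<Rightarrow> edge set \<Rightarrow> vtx set" where
  "syndrome k e = {v \<in> verts k. odd (card {ed \<in> e. v \<in> ends k ed})}"

definition face :: "nat \<Rightarrow> vtx \<Rightarrow> edge set" where
  "face k v = (case v of (x, y) \<Rightarrow>
      {(vert k x y, False), (vert k x (y + 1), False),
       (vert k x y, True), (vert k (x + 1) y, True)})"

definition sum_of_faces :: "nat \<Rightarrow> edge set \<Rightarrow> bool" where
  "sum_of_faces k c \<longleftrightarrow>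
     (\<exists>F \<subseteq> verts k. c = {ed \<in> edges k. odd (card {v \<in> F. ed \<in> face k v})})"

definition hpath :: "nat \<Rightarrow> vtx \<Rightarrow> nat \<Rightarrow> edge set" where
  "hpath k c h = {(vert k (fst c + int j) (snd c), False) | j. j < h}"

definition vpath :: "nat \<Rightarrow> vtx \<Rightarrow> nat \<Rightarrow> edge set" where
  "vpath k c h = {(vert k (fst c) (snd c - int j - 1), True) | j. j < h}"

definition c_alpha :: "nat \<Rightarrow> nat \<Rightarrow> vtx \<Rightarrow> vtx" where
  "c_alpha k h c = vert k (fst c) (snd c)"
definition c_beta :: "nat \<Rightarrow> nat \<Rightarrow> vtx \<Rightarrow> vtx" where
  "c_beta k h c = vert k (fst c + int h) (snd c)"
definition c_gamma :: "nat \<Rightarrow> nat \<Rightarrow> vtx \<Rightarrow> vtx" where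
  "c_gamma k h c = vert k (fst c) (snd c - int h)"
definition c_delta :: "nat \<Rightarrow> nat \<Rightarrow> vtx \<Rightarrow> vtx" where
  "c_delta k h c = vert k (fst c + int h) (snd c - int h)"

definition c_t :: "nat \<Rightarrow> nat \<Rightarrow> vtx \<Rightarrow> edge set" where
  "c_t k h c = hpath k c h"
definition c_b :: "nat \<Rightarrow> nat \<Rightarrow> vtx \<Rightarrow> edge set" where
  "c_b k h c = hpath k (fst c, snd c - int h) h"
definition c_l :: "nat \<Rightarrow> nat \<Rightarrow> vtx \<Rightarrow> edge set" where
  "c_l k h c = vpath k c h"
definition c_r :: "nat \<Rightarrow> nat \<Rightarrow> vtx \<Rightarrow> edge set" where
  "c_r k h c = vpath k (fst c + int h, snd c) h"

definition hh :: "nat \<Rightarrow> nat \<Rightarrow> nat" where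
  "hh k i = 2 ^ (k - i)"

definition blocks :: "nat \<Rightarrow> nat \<Rightarrow> vtx set" where
  "blocks k i = {(2 * int (hh k i) * int a, 2 * int (hh k i) * int b) | a b.
                   a < 2 ^ (i - 1) \<and> b < 2 ^ (i - 1)}"

definition cA :: "nat \<Rightarrow> vtx \<Rightarrow> vtx" where "cA h bl = bl"
definition cB :: "nat \<Rightarrow> vtx \<Rightarrow> vtx" where "cB h bl = (fst bl + int h, snd bl)"
definition cC :: "nat \<Rightarrow> vtx \<Rightarrow> vtx" where "cC h bl = (fst bl, snd bl - int h)"
definition cD :: "nat \<Rightarrow> vtx \<Rightarrow> vtx" where "cD h bl = (fst bl + int h, snd bl - int h)"

definition opt :: "bool \<Rightarrow> 'a set \<Rightarrow> 'a set" where
  "opt P A = (if P then A else {})"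

definition xfam :: "'b set \<Rightarrow> ('b \<Rightarrow> 'a set) \<Rightarrow> 'a set" where
  "xfam J f = {x. odd (card {j \<in> J. x \<in> f j})}"

definition step1_flip :: "nat \<Rightarrow> nat \<Rightarrow> vtx set \<Rightarrow> vtx \<Rightarrow> edge set" where
  "step1_flip k h S bl = (let c = cD h bl in
     symd (opt (c_alpha k h c \<in> S \<and> c_delta k h c \<in> S) (symd (c_l k h c) (c_b k h c)))
          (opt (c_beta k h c \<in> S \<and> c_gamma k h c \<in> S) (symd (c_b k h c) (c_r k h c))))"

definition step1_pair :: "nat \<Rightarrow> nat \<Rightarrow> vtx set \<Rightarrow> vtx \<Rightarrow> vtx set" where
  "step1_pair k h S bl = (let c = cD h bl in
     opt (c_alpha k h c \<in> S \<and> c_delta k h c \<in> S) {c_alpha k h c, c_delta k h c}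
     \<union> opt (c_beta k h c \<in> S \<and> c_gamma k h c \<in> S) {c_beta k h c, c_gamma k h c})"

definition step2_flip :: "nat \<Rightarrow> nat \<Rightarrow> vtx set \<Rightarrow> vtx \<Rightarrow> edge set" where
  "step2_flip k h S bl = (let c = cC h bl; d = cB h bl in
     symd (symd (opt (c_alpha k h c \<in> S \<and> c_gamma k h c \<in> S) (c_l k h c))
                (opt (c_beta k h c \<in> S \<and> c_delta k h c \<in> S) (c_r k h c)))
          (symd (opt (c_alpha k h d \<in> S \<and> c_beta k h d \<in> S) (c_t k h d))
                (opt (c_gamma k h d \<in> S \<and> c_delta k h d \<in> S) (c_b k h d))))"

definition step2_pair :: "nat \<Rightarrow> nat \<Rightarrow> vtx set \<Rightarrow> vtx \<Rightarrow> vtx set" where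
  "step2_pair k h S bl = (let c = cC h bl; d = cB h bl in
     opt (c_alpha k h c \<in> S \<and> c_gamma k h c \<in> S) {c_alpha k h c, c_gamma k h c}
     \<union> opt (c_beta k h c \<in> S \<and> c_delta k h c \<in> S) {c_beta k h c, c_delta k h c}
     \<union> opt (c_alpha k h d \<in> S \<and> c_beta k h d \<in> S) {c_alpha k h d, c_beta k h d}
     \<union> opt (c_gamma k h d \<in> S \<and> c_delta k h d \<in> S) {c_gamma k h d, c_delta k h d})"

definition step3_flip :: "nat \<Rightarrow> nat \<Rightarrow> vtx set \<Rightarrow> vtx \<Rightarrow> edge set" where
  "step3_flip k h S bl = (let c = cA h bl in
     symd (opt (c_beta k h c \<in> S) (c_t k h c))
      (symd (opt (c_gamma k h c \<in> S) (c_l k h c))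
            (opt (c_delta k h c \<in> S) (symd (c_l k h c) (c_b k h c)))))"

definition reduce :: "nat \<Rightarrow> nat \<Rightarrow> vtx set \<Rightarrow> edge set" where
  "reduce k i S = (let h = hh k i; Bs = blocks k i;
     F1 = xfam Bs (step1_flip k h S);
     S1 = S - (\<Union>bl\<in>Bs. step1_pair k h S bl);
     F2 = xfam Bs (step2_flip k h S1);
     S2 = S1 - (\<Union>bl\<in>Bs. step2_pair k h S1 bl);
     F3 = xfam Bs (step3_flip k h S2)
   in symd F1 (symd F2 F3))"

fun decode_from :: "nat \<Rightarrow> nat \<Rightarrow> vtx set \<Rightarrow> edge set \<Rightarrow> edge set" where
  "decode_from k 0 S acc = acc"
| "decode_from k (Suc j) S acc =
     (if S = {} then acc
      else (let f = reduce k (Suc j) S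
            in decode_from k j (symd S (syndrome k f)) (symd acc f)))"

definition decoder :: "nat \<Rightarrow> edge set \<Rightarrow> edge set" where
  "decoder k e = decode_from k k (syndrome k e) {}"

definition decoded_correctly :: "nat \<Rightarrow> edge set \<Rightarrow> bool" where
  "decoded_correctly k e \<longleftrightarrow> sum_of_faces k (symd e (decoder k e))"

definition omega :: "nat \<Rightarrow> nat" where
  "omega k = (GREATEST w. \<forall>e. e \<subseteq> edges k \<and> card e \<le> w \<longrightarrow> decoded_correctly k e)"

fun u :: "nat \<Rightarrow> nat" where
  "u 0 = 0"
| "u (Suc 0) = 1"
| "u (Suc (Suc 0)) = 2"
| "u (Suc (Suc (Suc 0))) = 3"
| "u (Suc (Suc (Suc (Suc k)))) = 2 * u (Suc (Suc k))"

end

theory Submission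
  imports Defs
begin

(* Consider errors supported on the row y = 0 that are constant on the segments of length h_(j+1),
   the sides of the cells of T_(j+1).  Their syndrome lies on the row, step 1 of the reduction on
   T_(j+1) does nothing, and steps 2 and 3 flip whole segments so that the residual error is again
   of this form one level up: on the coarse segment y it is the majority of the fine segments 2y,
   2y+1, 2y+2.  After the last level the residual is therefore empty or the whole row, according to
   the k-fold iterated overlapping majority evaluated at 0.  The whole row is not a sum of faces,
   since it crosses the line x = 1/2 once while every face crosses it an even number of times.
   Finally, errors of weight u_k with iterated majority 1 exist: a pair {x, x+1} of positions
   wins one level up as the triple starting at 2x+1, and a triple {t, t+1, t+2} wins as the two
   pairs starting at 2t+1 and 2t+4, so the weight doubles every second level. *)

section \<open>Iterated majority with overlapping windows\<close>

definition maj3 :: "bool \<Rightarrow> bool \<Rightarrow> bool \<Rightarrow> bool" where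
  "maj3 a b c \<longleftrightarrow> (a \<and> b) \<or> (a \<and> c) \<or> (b \<and> c)"

definition coarsen :: "(int \<Rightarrow> bool) \<Rightarrow> int \<Rightarrow> bool" where
  "coarsen g y = maj3 (g (2*y)) (g (2*y+1)) (g (2*y+2))"

fun coarse_value :: "nat \<Rightarrow> (int \<Rightarrow> bool) \<Rightarrow> bool" where
  "coarse_value 0 g = g 0"
| "coarse_value (Suc j) g = coarse_value j (coarsen g)"

lemma coarsen_mono: "(\<And>x. g x \<Longrightarrow> g' x) \<Longrightarrow> coarsen g y \<Longrightarrow> coarsen g' y"
  unfolding coarsen_def maj3_def by blast

lemma coarse_value_mono: "(\<And>x. g x \<Longrightarrow> g' x) \<Longrightarrow> coarse_value j g \<Longrightarrow> coarse_value j g'"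
proof (induction j arbitrary: g g')
  case (Suc j)
  have "coarse_value j (coarsen g')"
    by (rule Suc.IH[of "coarsen g"]) (use Suc.prems coarsen_mono in auto)
  then show ?case by simp
qed simp

lemma coarse_value_Suc_mono:
  "(\<And>x. g x \<Longrightarrow> coarsen g' x) \<Longrightarrow> coarse_value j g \<Longrightarrow> coarse_value (Suc j) g'"
  using coarse_value_mono[of g "coarsen g'"] by simp

lemma coarse_value_const: "coarse_value j (\<lambda>_. b) = b"
proof -
  have "coarsen (\<lambda>_. b) = (\<lambda>_. b)" unfolding coarsen_def maj3_def by auto
  then show ?thesis by (induction j) simp_all
qed

definition mem_mod :: "nat \<Rightarrow> int set \<Rightarrow> int \<Rightarrow> bool" where
  "mem_mod n P y \<longleftrightarrow> (\<exists>p\<in>P. y mod 2^n = p mod 2^n)"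

definition pairs :: "int set \<Rightarrow> int set" where
  "pairs X = (\<Union>x\<in>X. {x, x+1})"

definition triples :: "int set \<Rightarrow> int set" where
  "triples X = (\<Union>x\<in>X. {x, x+1, x+2})"

lemma mod_double_cong:
  "(y::int) mod 2^n = z mod 2^n \<Longrightarrow> (2*y + c) mod 2^(Suc n) = (2*z + c) mod 2^(Suc n)"
  by (metis mod_add_cong mod_mult_mult1 power_Suc)

lemma mem_mod_Suc_double:
  "y mod 2^n = z mod 2^n \<Longrightarrow> 2*z + c \<in> P \<Longrightarrow> mem_mod (Suc n) P (2*y + c)"
  unfolding mem_mod_def using mod_double_cong by blast

lemma coarsen_mem_mod_pairs:
  assumes "mem_mod n (pairs X) y"
  shows "coarsen (mem_mod (Suc n) (triples ((\<lambda>x. 2*x+1) ` X))) y"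
proof -
  let ?P = "triples ((\<lambda>x. 2*x+1) ` X)"
  obtain x where "x \<in> X" and y: "y mod 2^n = x mod 2^n \<or> y mod 2^n = (x+1) mod 2^n"
    using assms unfolding mem_mod_def pairs_def by blast
  then have P: "2*x+1 \<in> ?P" "2*x+2 \<in> ?P" "2*(x+1)+0 \<in> ?P" "2*(x+1)+1 \<in> ?P"
    unfolding triples_def by force+
  from y show ?thesis
  proof
    assume "y mod 2^n = x mod 2^n"
    from mem_mod_Suc_double[OF this P(1)] mem_mod_Suc_double[OF this P(2)]
    show ?thesis unfolding coarsen_def maj3_def by blast
  next
    assume "y mod 2^n = (x+1) mod 2^n"
    from mem_mod_Suc_double[OF this P(3)] mem_mod_Suc_double[OF this P(4)]
    show ?thesis unfolding coarsen_def maj3_def by auto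
  qed
qed

lemma coarsen_mem_mod_triples:
  assumes "mem_mod n (triples T) y"
  shows "coarsen (mem_mod (Suc n) (pairs ((\<lambda>t. 2*t+1) ` T \<union> (\<lambda>t. 2*t+4) ` T))) y"
proof -
  let ?P = "pairs ((\<lambda>t. 2*t+1) ` T \<union> (\<lambda>t. 2*t+4) ` T)"
  obtain t where "t \<in> T" and y: "y mod 2^n = t mod 2^n \<or> y mod 2^n = (t+1) mod 2^n \<or>
      y mod 2^n = (t+2) mod 2^n"
    using assms unfolding mem_mod_def triples_def by blast
  then have P: "2*t+1 \<in> ?P" "2*t+2 \<in> ?P" "2*(t+1)+0 \<in> ?P" "2*(t+1)+2 \<in> ?P"
      "2*(t+2)+0 \<in> ?P" "2*(t+2)+1 \<in> ?P"
    unfolding pairs_def by force+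
  from y consider "y mod 2^n = t mod 2^n" | "y mod 2^n = (t+1) mod 2^n"
    | "y mod 2^n = (t+2) mod 2^n"
    by blast
  then show ?thesis
  proof cases
    case 1
    from mem_mod_Suc_double[OF 1 P(1)] mem_mod_Suc_double[OF 1 P(2)]
    show ?thesis unfolding coarsen_def maj3_def by blast
  next
    case 2
    from mem_mod_Suc_double[OF 2 P(3)] mem_mod_Suc_double[OF 2 P(4)]
    show ?thesis unfolding coarsen_def maj3_def by auto
  next
    case 3
    from mem_mod_Suc_double[OF 3 P(5)] mem_mod_Suc_double[OF 3 P(6)]
    show ?thesis unfolding coarsen_def maj3_def by auto
  qed
qed

fun pair_seeds :: "nat \<Rightarrow> int set" where
  "pair_seeds 0 = {0}"
| "pair_seeds (Suc m) = (\<lambda>x. 4*x+3) ` pair_seeds m \<union> (\<lambda>x. 4*x+6) ` pair_seeds m"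

definition triple_seeds :: "nat \<Rightarrow> int set" where
  "triple_seeds m = (\<lambda>x. 2*x+1) ` pair_seeds m"

lemma pair_seeds_Suc:
  "pair_seeds (Suc m) = (\<lambda>t. 2*t+1) ` triple_seeds m \<union> (\<lambda>t. 2*t+4) ` triple_seeds m"
  unfolding triple_seeds_def image_image by (simp add: algebra_simps)

lemma finite_pair_seeds: "finite (pair_seeds m)"
  by (induction m) simp_all

lemma finite_triple_seeds: "finite (triple_seeds m)"
  by (simp add: triple_seeds_def finite_pair_seeds)

lemma card_pair_seeds: "card (pair_seeds m) \<le> 2^m"
  and card_triple_seeds: "card (triple_seeds m) \<le> 2^m"
proof -
  have "card (triple_seeds m) \<le> card (pair_seeds m)" for m
    unfolding triple_seeds_def by (rule card_image_le[OF finite_pair_seeds])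
  moreover have "card (pair_seeds m) \<le> 2^m" for m
  proof (induction m)
    case (Suc m)
    have "card (pair_seeds (Suc m)) \<le> card (triple_seeds m) + card (triple_seeds m)"
      unfolding pair_seeds_Suc
      by (meson add_mono card_Un_le card_image_le finite_triple_seeds order_trans)
    with Suc \<open>card (triple_seeds m) \<le> card (pair_seeds m)\<close> show ?case by simp
  qed simp
  ultimately show "card (pair_seeds m) \<le> 2^m" "card (triple_seeds m) \<le> 2^m"
    using order_trans by blast+
qed

lemma card_pairs: "finite X \<Longrightarrow> card (pairs X) \<le> 2 * card X"
  unfolding pairs_def using card_UN_le[of X "\<lambda>x. {x, x+1}"] by simp

lemma card_triples: "finite X \<Longrightarrow> card (triples X) \<le> 3 * card X"
  unfolding triples_def using card_UN_le[of X "\<lambda>x. {x, x+1, x+2}"] by simp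

lemma coarse_value_pairs_seeds: "coarse_value (2*m+2) (mem_mod (2*m+2) (pairs (pair_seeds m)))"
  and coarse_value_triples_seeds: "coarse_value (2*m+3) (mem_mod (2*m+3) (triples (triple_seeds m)))"
proof -
  have to_triples: "coarse_value (Suc n) (mem_mod (Suc n) (triples (triple_seeds m)))"
    if "coarse_value n (mem_mod n (pairs (pair_seeds m)))" for n m
    using coarse_value_Suc_mono[OF coarsen_mem_mod_pairs that]
    unfolding triple_seeds_def .
  have to_pairs: "coarse_value (Suc n) (mem_mod (Suc n) (pairs (pair_seeds (Suc m))))"
    if "coarse_value n (mem_mod n (triples (triple_seeds m)))" for n m
    using coarse_value_Suc_mono[OF coarsen_mem_mod_triples that]
    unfolding pair_seeds_Suc .
  have even: "coarse_value (2*m+2) (mem_mod (2*m+2) (pairs (pair_seeds m)))" for m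
  proof (induction m)
    case 0
    show ?case by (simp add: coarsen_def maj3_def mem_mod_def pairs_def)
  next
    case (Suc m)
    have "2 * Suc m + 2 = Suc (Suc (2*m+2))" by simp
    then show ?case using to_pairs[OF to_triples[OF Suc]] by metis
  qed
  then show "coarse_value (2*m+2) (mem_mod (2*m+2) (pairs (pair_seeds m)))" .
  have "2*m+3 = Suc (2*m+2)" by simp
  then show "coarse_value (2*m+3) (mem_mod (2*m+3) (triples (triple_seeds m)))"
    using to_triples[OF even] by metis
qed

lemma u_even: "u (2*m+2) = 2^(m+1)"
  by (induction m) (simp_all add: numeral_eq_Suc)

lemma u_odd: "u (2*m+3) = 3 * 2^m"
  by (induction m) (simp_all add: numeral_eq_Suc)

lemma small_majority_set:
  assumes "k \<ge> 1"
  obtains P where "finite P" "card P \<le> u k" "coarse_value k (mem_mod k P)"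
proof -
  have "\<exists>m. k = 1 \<or> k = 2*m+2 \<or> k = 2*m+3"
    using assms by presburger
  then obtain m where "k = 1 \<or> k = 2*m+2 \<or> k = 2*m+3" ..
  then show ?thesis
  proof (elim disjE)
    assume "k = 1"
    then show ?thesis by (intro that[of "{0}"]) (simp_all add: coarsen_def maj3_def mem_mod_def)
  next
    assume k: "k = 2*m+2"
    have "card (pairs (pair_seeds m)) \<le> u k"
      unfolding k u_even using card_pairs[OF finite_pair_seeds[of m]] card_pair_seeds[of m] by simp
    moreover have "finite (pairs (pair_seeds m))"
      unfolding pairs_def using finite_pair_seeds by simp
    ultimately show ?thesis
      using that coarse_value_pairs_seeds[of m] unfolding k by blast
  next
    assume k: "k = 2*m+3"
    have "card (triples (triple_seeds m)) \<le> u k"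
      unfolding k u_odd using card_triples[OF finite_triple_seeds[of m]] card_triple_seeds[of m]
      by simp
    moreover have "finite (triples (triple_seeds m))"
      unfolding triples_def using finite_triple_seeds by simp
    ultimately show ?thesis
      using that coarse_value_triples_seeds[of m] unfolding k by blast
  qed
qed

lemma symd_empty [simp]: "symd {} A = A" "symd A {} = A"
  unfolding symd_def by auto

lemma symd_assoc: "symd (symd A B) C = symd A (symd B C)"
  unfolding symd_def by blast

lemma card_symd_parity:
  assumes "finite A" "finite B"
  shows "even (card (symd A B)) \<longleftrightarrow> (even (card A) \<longleftrightarrow> even (card B))"
proof -
  have "card (symd A B) = card (A - B) + card (B - A)"
    using assms unfolding symd_def by (simp add: card_Un_disjoint Diff_Int_distrib2 disjoint_iff)
  moreover have "card (A - B) = card A - card (A \<inter> B)" "card (B - A) = card B - card (A \<inter> B)"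
    using assms by (simp_all add: card_Diff_subset_Int Int_commute)
  moreover have "card (A \<inter> B) \<le> card A" "card (A \<inter> B) \<le> card B"
    using assms by (simp_all add: card_mono)
  ultimately have "card (symd A B) + 2 * card (A \<inter> B) = card A + card B"
    by linarith
  then show ?thesis by presburger
qed

lemma xfam_disjoint:
  assumes "\<And>x i i'. i \<in> I \<Longrightarrow> i' \<in> I \<Longrightarrow> x \<in> f i \<Longrightarrow> x \<in> f i' \<Longrightarrow>
    i = i'"
  shows "xfam I f = (\<Union>i\<in>I. f i)"
proof (rule set_eqI)
  fix x
  show "x \<in> xfam I f \<longleftrightarrow> x \<in> (\<Union>i\<in>I. f i)"
  proof (cases "\<exists>i\<in>I. x \<in> f i")
    case True
    then obtain i where "i \<in> I" "x \<in> f i" by blast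
    with assms have "{i \<in> I. x \<in> f i} = {i}" by blast
    with \<open>x \<in> f i\<close> \<open>i \<in> I\<close> show ?thesis unfolding xfam_def by auto
  next
    case False
    then have none: "{i \<in> I. x \<in> f i} = {}" by blast
    show ?thesis unfolding xfam_def using False by (simp add: none)
  qed
qed

lemma xfam_empty: "(\<And>i. i \<in> I \<Longrightarrow> f i = {}) \<Longrightarrow> xfam I f = {}"
  by (subst xfam_disjoint) auto

lemma xfam_Int: "xfam I (\<lambda>i. A i \<inter> B) = xfam I A \<inter> B"
proof (rule set_eqI)
  fix x
  show "x \<in> xfam I (\<lambda>i. A i \<inter> B) \<longleftrightarrow> x \<in> xfam I A \<inter> B"
    by (cases "x \<in> B") (simp_all add: xfam_def)
qed

lemma finite_xfam:
  assumes "finite I" "\<And>i. i \<in> I \<Longrightarrow> finite (A i)"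
  shows "finite (xfam I A)"
proof -
  have "xfam I A \<subseteq> (\<Union>i\<in>I. A i)"
  proof
    fix x assume "x \<in> xfam I A"
    then have "odd (card {i \<in> I. x \<in> A i})" unfolding xfam_def by simp
    then have "{i \<in> I. x \<in> A i} \<noteq> {}" by (intro notI) simp
    then show "x \<in> (\<Union>i\<in>I. A i)" by blast
  qed
  then show ?thesis using assms by (meson finite_UN_I finite_subset)
qed

lemma xfam_insert:
  assumes "finite I" "i \<notin> I"
  shows "xfam (insert i I) A = symd (xfam I A) (A i)"
proof (rule set_eqI)
  fix x
  have "card {i' \<in> insert i I. x \<in> A i'} =
      (if x \<in> A i then Suc (card {i' \<in> I. x \<in> A i'}) else card {i' \<in> I. x \<in> A i'})"
  proof (cases "x \<in> A i")
    case True
    then have "{i' \<in> insert i I. x \<in> A i'} = insert i {i' \<in> I. x \<in> A i'}" by auto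
    then show ?thesis using True assms by simp
  next
    case False
    then have "{i' \<in> insert i I. x \<in> A i'} = {i' \<in> I. x \<in> A i'}" by auto
    then show ?thesis using False by simp
  qed
  then show "x \<in> xfam (insert i I) A \<longleftrightarrow> x \<in> symd (xfam I A) (A i)"
    unfolding xfam_def symd_def by auto
qed

lemma even_card_xfam:
  assumes "finite I" "\<And>i. i \<in> I \<Longrightarrow> finite (A i) \<and> even (card (A i))"
  shows "even (card (xfam I A))"
  using assms
proof (induction I rule: finite_induct)
  case (insert i I)
  then show ?case
    unfolding xfam_insert[OF insert.hyps]
    by (simp add: card_symd_parity finite_xfam)
qed (simp add: xfam_def)

section \<open>Errors on the row y = 0\<close>

definition row_edges :: "nat \<Rightarrow> (int \<Rightarrow> bool) \<Rightarrow> edge set" where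
  "row_edges k P = {((x, 0), False) | x. 0 \<le> x \<and> x < 2^k \<and> P x}"

definition row_verts :: "nat \<Rightarrow> (int \<Rightarrow> bool) \<Rightarrow> vtx set" where
  "row_verts k P = {(x, 0) | x. 0 \<le> x \<and> x < 2^k \<and> P x}"

lemma mem_row_verts: "(a, b) \<in> row_verts k P \<longleftrightarrow> b = 0 \<and> 0 \<le> a \<and> a < 2^k \<and> P a"
  unfolding row_verts_def by blast

lemma row_edges_cong:
  "(\<And>x. 0 \<le> x \<Longrightarrow> x < 2^k \<Longrightarrow> P x = Q x) \<Longrightarrow> row_edges k P = row_edges k Q"
  unfolding row_edges_def by blast

lemma row_verts_cong:
  "(\<And>x. 0 \<le> x \<Longrightarrow> x < 2^k \<Longrightarrow> P x = Q x) \<Longrightarrow> row_verts k P = row_verts k Q"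
  unfolding row_verts_def by blast

lemma symd_row_edges: "symd (row_edges k P) (row_edges k Q) = row_edges k (\<lambda>x. P x \<noteq> Q x)"
  unfolding symd_def row_edges_def by auto

lemma symd_row_verts: "symd (row_verts k P) (row_verts k Q) = row_verts k (\<lambda>x. P x \<noteq> Q x)"
  unfolding symd_def row_verts_def by auto

lemma opt_row_edges: "opt C (row_edges k P) = row_edges k (\<lambda>x. C \<and> P x)"
  unfolding opt_def row_edges_def by auto

lemma xfam_row_edges:
  assumes "\<And>i. i \<in> I \<Longrightarrow> f i = row_edges k (\<lambda>x. part x = i \<and> P x)"
    and "\<And>x. 0 \<le> x \<Longrightarrow> x < 2^k \<Longrightarrow> part x \<in> I"
  shows "xfam I f = row_edges k P"
proof -
  have "xfam I f = (\<Union>i\<in>I. f i)"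
    by (rule xfam_disjoint) (auto simp: assms(1) row_edges_def)
  also have "\<dots> = row_edges k P"
    using assms by (auto simp: row_edges_def)
  finally show ?thesis .
qed

lemma mod_succ_eq_iff:
  fixes N x a :: int
  assumes "0 \<le> x" "x < N" "0 \<le> a" "a < N"
  shows "(x + 1) mod N = a \<longleftrightarrow> x = (a - 1) mod N"
proof -
  have "(x + 1) mod N = a \<longleftrightarrow> (x + 1) mod N = a mod N" using assms by simp
  also have "\<dots> \<longleftrightarrow> x mod N = (a - 1) mod N" by (simp add: mod_eq_dvd_iff algebra_simps)
  also have "\<dots> \<longleftrightarrow> x = (a - 1) mod N" using assms by simp
  finally show ?thesis .
qed

lemma pred_mod_neq:
  fixes N a :: int
  assumes "N \<ge> 2" "0 \<le> a" "a < N"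
  shows "(a - 1) mod N \<noteq> a"
  using assms by (cases "a = 0") (auto simp: zmod_zminus1_eq_if)

lemma two_power_ge_2: "k \<ge> 1 \<Longrightarrow> (2::int)^k \<ge> 2"
  by (metis power_increasing power_one_right one_le_numeral)

lemma row_edges_at_vertex:
  assumes "(a, b) \<in> verts k"
  shows "{ed \<in> row_edges k P. (a, b) \<in> ends k ed} =
    (\<lambda>x. ((x, 0), False)) ` {x \<in> {a, (a - 1) mod 2^k}. b = 0 \<and> P x}"
proof (rule set_eqI)
  fix ed
  have a: "0 \<le> a" "a < 2^k" using assms unfolding verts_def by auto
  show "ed \<in> {ed \<in> row_edges k P. (a, b) \<in> ends k ed} \<longleftrightarrow>
    ed \<in> (\<lambda>x. ((x, 0), False)) ` {x \<in> {a, (a - 1) mod 2^k}. b = 0 \<and> P x}"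
  proof
    assume "ed \<in> {ed \<in> row_edges k P. (a, b) \<in> ends k ed}"
    then obtain x where x: "ed = ((x, 0), False)" "0 \<le> x" "x < 2^k" "P x"
      and "(a, b) \<in> ends k ed"
      by (auto simp: row_edges_def)
    then have "b = 0" "x = a \<or> (x + 1) mod 2^k = a"
      by (auto simp: ends_def vert_def)
    then show "ed \<in> (\<lambda>x. ((x, 0), False)) ` {x \<in> {a, (a - 1) mod 2^k}. b = 0 \<and> P x}"
      using x mod_succ_eq_iff[OF x(2,3) a] by auto
  next
    assume "ed \<in> (\<lambda>x. ((x, 0), False)) ` {x \<in> {a, (a - 1) mod 2^k}. b = 0 \<and> P x}"
    then obtain x where "ed = ((x, 0), False)" "x = a \<or> x = (a - 1) mod 2^k" "b = 0" "P x"
      by auto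
    moreover have "((a - 1) mod 2^k + 1) mod 2^k = a"
      using mod_succ_eq_iff[of "(a - 1) mod 2^k" "2^k" a] a by simp
    ultimately show "ed \<in> {ed \<in> row_edges k P. (a, b) \<in> ends k ed}"
      using a by (auto simp: row_edges_def ends_def vert_def)
  qed
qed

lemma odd_card_filter_doubleton:
  "a \<noteq> a' \<Longrightarrow> odd (card {x \<in> {a, a'}. Q x}) \<longleftrightarrow> Q a \<noteq> Q a'"
  by (cases "Q a"; cases "Q a'") (auto simp: Collect_disj_eq Collect_conj_eq)

lemma syndrome_row_edges:
  assumes "k \<ge> 1"
  shows "syndrome k (row_edges k P) = row_verts k (\<lambda>x. P x \<noteq> P ((x - 1) mod 2^k))"
proof (rule set_eqI)
  fix v :: vtx
  obtain a b where v: "v = (a, b)" by fastforce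
  show "v \<in> syndrome k (row_edges k P) \<longleftrightarrow>
    v \<in> row_verts k (\<lambda>x. P x \<noteq> P ((x - 1) mod 2^k))"
  proof (cases "v \<in> verts k")
    case True
    have "card {ed \<in> row_edges k P. (a, b) \<in> ends k ed} =
        card {x \<in> {a, (a - 1) mod 2^k}. b = 0 \<and> P x}"
      unfolding row_edges_at_vertex[OF True[unfolded v]] by (rule card_image) (simp add: inj_on_def)
    moreover have "(a - 1) mod 2^k \<noteq> a"
      using True two_power_ge_2[OF assms] pred_mod_neq unfolding v verts_def by blast
    ultimately have "odd (card {ed \<in> row_edges k P. (a, b) \<in> ends k ed}) \<longleftrightarrow>
        b = 0 \<and> P a \<noteq> P ((a - 1) mod 2^k)"
      using odd_card_filter_doubleton[of a "(a - 1) mod 2^k" "\<lambda>x. b = 0 \<and> P x"] by auto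
    then show ?thesis
      using True unfolding v syndrome_def row_verts_def verts_def by auto
  next
    case False
    then show ?thesis unfolding syndrome_def row_verts_def verts_def by auto
  qed
qed

lemma syndrome_symd_row_edges:
  assumes "k \<ge> 1"
  shows "symd (syndrome k (row_edges k P)) (syndrome k (row_edges k Q)) =
    syndrome k (row_edges k (\<lambda>x. P x \<noteq> Q x))"
  unfolding syndrome_row_edges[OF assms] symd_row_verts
  by (rule row_verts_cong) auto

section \<open>One level of the decoder on a row error\<close>

lemma div_eq_iff_bounds:
  fixes x h c :: int
  assumes "h > 0"
  shows "x div h = c \<longleftrightarrow> c * h \<le> x \<and> x < (c + 1) * h"
proof
  assume "x div h = c"
  moreover have "x = x div h * h + x mod h" by simp
  moreover have "0 \<le> x mod h" "x mod h < h" using assms by simp_all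
  ultimately show "c * h \<le> x \<and> x < (c + 1) * h" by (simp add: algebra_simps)
next
  assume "c * h \<le> x \<and> x < (c + 1) * h"
  then show "x div h = c"
    by (intro int_div_pos_eq[of x h c "x - c * h"]) (simp_all add: algebra_simps)
qed

(* cell_side k j is h_(j+1); lemmas indexed by j concern the reduction on T_(j+1). *)
definition cell_side :: "nat \<Rightarrow> nat \<Rightarrow> int" where
  "cell_side k j = 2^(k - Suc j)"

lemma int_hh_Suc: "int (hh k (Suc j)) = cell_side k j"
  unfolding hh_def cell_side_def by simp

lemma cell_side_pos: "cell_side k j > 0"
  unfolding cell_side_def by simp

definition jump :: "(int \<Rightarrow> bool) \<Rightarrow> int \<Rightarrow> bool" where
  "jump g c \<longleftrightarrow> g c \<noteq> g (c - 1)"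

lemma jump_free_const:
  assumes "\<And>c. \<not> jump g c"
  shows "g c = g 0"
proof -
  have step: "g i = g (i - 1)" for i using assms[of i] by (simp add: jump_def)
  show ?thesis
  proof (induction c rule: int_induct[where k = 0])
    case (step1 i) then show ?case using step[of "i + 1"] by simp
  next
    case (step2 i) then show ?case using step[of i] by simp
  qed simp
qed

definition row_syndrome :: "nat \<Rightarrow> nat \<Rightarrow> (int \<Rightarrow> bool) \<Rightarrow> vtx set" where
  "row_syndrome k j g = syndrome k (row_edges k (\<lambda>x. g (x div cell_side k j)))"

definition row_block :: "nat \<Rightarrow> nat \<Rightarrow> int \<Rightarrow> vtx" where
  "row_block k j x = (2 * cell_side k j * (x div cell_side k j div 2), 0)"

(* S at the start of step 3; step 1 pairs nothing on a row syndrome. *)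
definition step2_residue :: "nat \<Rightarrow> nat \<Rightarrow> (int \<Rightarrow> bool) \<Rightarrow> vtx set" where
  "step2_residue k j g = row_syndrome k j g -
     (\<Union>bl\<in>blocks k (Suc j). step2_pair k (hh k (Suc j)) (row_syndrome k j g) bl)"

(* The right-hand side is the value on segment c after the flips of step 2 (odd c) and
   step 3 (even c). *)
lemma coarsen_eq_flipped:
  "coarsen g (c div 2) \<longleftrightarrow>
    g c \<noteq> ((odd c \<and> jump g c \<and> jump g (c + 1)) \<noteq>
      (even c \<and> jump g (c + 1) \<and> \<not> jump g (c + 2)))"
proof (cases "even c")
  case True
  then obtain y where c: "c = 2 * y" by blast
  have y: "2 * y + 2 - 1 = 2 * y + 1" by simp
  show ?thesis unfolding c coarsen_def jump_def maj3_def y by auto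
next
  case False
  then obtain y where c: "c = 2 * y + 1" using oddE by blast
  have y: "2 * y + 1 - 1 = 2 * y" "2 * y + 1 + 1 = 2 * y + 2" "2 * y + 2 - 1 = 2 * y + 1"
    "(2 * y + 1) div 2 = y"
    by simp_all
  show ?thesis unfolding c coarsen_def jump_def maj3_def y by auto
qed

context
  fixes k j :: nat
  assumes level: "Suc j \<le> k"
begin

lemma two_power_k_eq: "(2::int)^k = cell_side k j * 2^(Suc j)"
proof -
  have "k = (k - Suc j) + Suc j" using level by simp
  then show ?thesis unfolding cell_side_def by (metis power_add)
qed

lemma level_pos: "k \<ge> 1"
  using level by simp

lemma two_cell_side: "2 * cell_side k j = 2^(k - j)"
  using level unfolding cell_side_def by (simp add: Suc_diff_Suc[symmetric])

lemma middle_row_nonzero: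
  assumes "b < 2^j"
  shows "(2 * cell_side k j * int b - cell_side k j) mod 2^k \<noteq> 0"
proof
  assume "(2 * cell_side k j * int b - cell_side k j) mod 2^k = 0"
  then have "cell_side k j * 2^Suc j dvd cell_side k j * (2 * int b - 1)"
    unfolding two_power_k_eq by (simp add: algebra_simps mod_eq_0_iff_dvd)
  then have "(2::int)^Suc j dvd 2 * int b - 1"
    using cell_side_pos[of k j] by simp
  then have "(2::int) dvd 2 * int b - 1"
    by (meson dvd_power dvd_trans zero_less_Suc)
  then show False by presburger
qed

lemma top_row_zero_iff:
  assumes "b < 2^j"
  shows "(2 * cell_side k j * int b) mod 2^k = 0 \<longleftrightarrow> b = 0"
proof -
  have "int b < 2^j" using assms by simp
  then have "2 * cell_side k j * int b < 2^k"
    unfolding two_power_k_eq using cell_side_pos[of k j] by simp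
  then have "(2 * cell_side k j * int b) mod 2^k = 2 * cell_side k j * int b"
    using cell_side_pos[of k j] by simp
  then show ?thesis using cell_side_pos[of k j] by simp
qed

lemma blocksE:
  assumes "bl \<in> blocks k (Suc j)"
  obtains a b
  where "bl = (2 * cell_side k j * int a, 2 * cell_side k j * int b)" "a < 2^j" "b < 2^j"
  using assms unfolding blocks_def int_hh_Suc by auto

lemma vert_corner_eq_iff:
  "vert k (c * cell_side k j) 0 = vert k (c' * cell_side k j) 0 \<longleftrightarrow>
    c mod 2^Suc j = c' mod 2^Suc j"
  using cell_side_pos[of k j]
  unfolding vert_def two_power_k_eq by (simp add: mult_mod_left mult.commute)

lemma block_in_blocks: "a < 2^j \<Longrightarrow> (2 * cell_side k j * int a, 0) \<in> blocks k (Suc j)"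
  unfolding blocks_def int_hh_Suc by (rule CollectI, rule exI[of _ a], rule exI[of _ 0]) simp

lemma hpath_cell_row_edges:
  assumes "0 \<le> c" "c < 2^Suc j"
  shows "hpath k (c * cell_side k j, 0) (hh k (Suc j)) =
    row_edges k (\<lambda>x. x div cell_side k j = c)"
proof (rule set_eqI)
  fix ed
  have h: "cell_side k j > 0" by (rule cell_side_pos)
  have "(c + 1) * cell_side k j \<le> 2^Suc j * cell_side k j"
    using assms h by (intro mult_right_mono) simp_all
  then have le: "(c + 1) * cell_side k j \<le> 2^k"
    unfolding two_power_k_eq by (simp add: mult.commute)
  show "ed \<in> hpath k (c * cell_side k j, 0) (hh k (Suc j)) \<longleftrightarrow>
      ed \<in> row_edges k (\<lambda>x. x div cell_side k j = c)"
  proof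
    assume "ed \<in> hpath k (c * cell_side k j, 0) (hh k (Suc j))"
    then obtain i where i: "i < hh k (Suc j)" "ed = (vert k (c * cell_side k j + int i) 0, False)"
      unfolding hpath_def by auto
    have "int i < cell_side k j" using i(1) unfolding int_hh_Suc[symmetric] by simp
    then have x: "0 \<le> c * cell_side k j + int i"
      "c * cell_side k j + int i < (c + 1) * cell_side k j"
      using assms h by (simp_all add: algebra_simps)
    then have "(c * cell_side k j + int i) mod 2^k = c * cell_side k j + int i"
      using le by simp
    moreover have "(c * cell_side k j + int i) div cell_side k j = c"
      using div_eq_iff_bounds[OF h] x by simp
    ultimately show "ed \<in> row_edges k (\<lambda>x. x div cell_side k j = c)"
      unfolding row_edges_def i(2) vert_def using x le by auto
  next
    assume "ed \<in> row_edges k (\<lambda>x. x div cell_side k j = c)"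
    then obtain x where x: "ed = ((x, 0), False)" "0 \<le> x" "x < 2^k" "x div cell_side k j = c"
      unfolding row_edges_def by blast
    have b: "c * cell_side k j \<le> x" "x < (c + 1) * cell_side k j"
      using div_eq_iff_bounds[OF h] x(4) by auto
    define i where "i = nat (x - c * cell_side k j)"
    have i: "int i = x - c * cell_side k j" using b unfolding i_def by simp
    then have "int i < int (hh k (Suc j))" using b unfolding int_hh_Suc by (simp add: algebra_simps)
    moreover have "ed = (vert k (c * cell_side k j + int i) 0, False)"
      unfolding x(1) vert_def using i x(2,3) by simp
    ultimately show "ed \<in> hpath k (c * cell_side k j, 0) (hh k (Suc j))"
      unfolding hpath_def by (auto simp del: of_nat_less_iff)
  qed
qed

lemma row_block_bounds:
  assumes "0 \<le> x" "x < 2^k"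
  shows "0 \<le> x div cell_side k j" "x div cell_side k j < 2^Suc j"
proof -
  have h: "cell_side k j > 0" by (rule cell_side_pos)
  show "0 \<le> x div cell_side k j" using assms h by (simp add: pos_imp_zdiv_nonneg_iff)
  have "x div cell_side k j * cell_side k j \<le> x" "x < 2^Suc j * cell_side k j"
    using div_eq_iff_bounds[OF h, of x "x div cell_side k j"] assms(2)
    unfolding two_power_k_eq by (simp_all add: mult.commute)
  then show "x div cell_side k j < 2^Suc j"
    using h by (meson le_less_trans mult_less_cancel_right_pos)
qed

lemma row_block_in_blocks:
  assumes "0 \<le> x" "x < 2^k"
  shows "row_block k j x \<in> blocks k (Suc j)"
proof -
  define a where "a = nat (x div cell_side k j div 2)"
  have a: "int a = x div cell_side k j div 2"
    using row_block_bounds[OF assms] unfolding a_def by simp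
  then have "int a < 2^j"
    using row_block_bounds[OF assms] by simp
  then have "a < 2^j" by simp
  then show ?thesis
    unfolding row_block_def using block_in_blocks a by metis
qed

lemma row_block_eq_iff:
  "row_block k j x = (2 * cell_side k j * int a, 2 * cell_side k j * int b) \<longleftrightarrow>
    x div cell_side k j div 2 = int a \<and> b = 0"
  using cell_side_pos[of k j] unfolding row_block_def by simp

lemma corner_index_bounds:
  assumes "a < 2^j"
  shows "0 \<le> 2 * int a" "2 * int a + 1 < 2^Suc j"
proof -
  have "int a < 2^j" "(2::int)^Suc j = 2 * 2^j"
    using assms by simp_all
  then show "0 \<le> 2 * int a" "2 * int a + 1 < 2^Suc j" by linarith+
qed

context
  fixes g :: "int \<Rightarrow> bool"
  assumes periodic: "\<And>c. g c = g (c mod 2^(Suc j))"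
begin

lemma div_cell_side_mod_periodic: "g ((x mod 2^k) div cell_side k j) = g (x div cell_side k j)"
proof -
  have "(x mod (cell_side k j * 2^Suc j)) div cell_side k j = (x div cell_side k j) mod 2^Suc j"
    using cell_side_pos[of k j] by (simp add: zmod_zmult2_eq)
  then show ?thesis unfolding two_power_k_eq using periodic by metis
qed

lemma vert_in_row_syndrome:
  "vert k z y \<in> row_syndrome k j g \<longleftrightarrow>
    y mod 2^k = 0 \<and> g (z div cell_side k j) \<noteq> g ((z - 1) div cell_side k j)"
proof -
  have "(z mod 2^k - 1) mod 2^k = (z - 1) mod (2::int)^k"
    by (simp add: mod_diff_left_eq)
  then show ?thesis
    unfolding row_syndrome_def syndrome_row_edges[OF level_pos] vert_def mem_row_verts
    by (simp add: div_cell_side_mod_periodic)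
qed

lemma corner_in_row_syndrome:
  "vert k (c * cell_side k j) y \<in> row_syndrome k j g \<longleftrightarrow> y mod 2^k = 0 \<and> jump g c"
proof -
  have "(c * cell_side k j - 1) div cell_side k j = c - 1"
    using cell_side_pos[of k j] by (subst div_eq_iff_bounds) (simp_all add: algebra_simps)
  then show ?thesis
    unfolding vert_in_row_syndrome jump_def using cell_side_pos[of k j] by simp
qed

lemma middle_row_notin:
  "b < 2^j \<Longrightarrow> vert k z (2 * cell_side k j * int b - cell_side k j) \<notin> row_syndrome k j g"
  using middle_row_nonzero vert_in_row_syndrome by blast

lemma step1_flip_row_syndrome:
  "b < 2^j \<Longrightarrow>
    step1_flip k (hh k (Suc j)) (row_syndrome k j g) (2 * cell_side k j * int a, 2 * cell_side k j * int b)
      = {}"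
  using middle_row_notin
  by (simp add: step1_flip_def Let_def cD_def c_alpha_def c_beta_def c_gamma_def c_delta_def
      int_hh_Suc opt_def symd_def)

lemma step1_pair_row_syndrome:
  "b < 2^j \<Longrightarrow>
    step1_pair k (hh k (Suc j)) (row_syndrome k j g) (2 * cell_side k j * int a, 2 * cell_side k j * int b)
      = {}"
  using middle_row_notin
  by (simp add: step1_pair_def Let_def cD_def c_alpha_def c_beta_def c_gamma_def c_delta_def
      int_hh_Suc opt_def)

lemma step2_flip_row_syndrome:
  assumes "b < 2^j"
  shows "step2_flip k (hh k (Suc j)) (row_syndrome k j g)
      (2 * cell_side k j * int a, 2 * cell_side k j * int b) =
     opt (b = 0 \<and> jump g (2 * int a + 1) \<and> jump g (2 * int a + 2))
       (hpath k ((2 * int a + 1) * cell_side k j, 0) (hh k (Suc j)))"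
proof -
  have "2 * cell_side k j * int a + cell_side k j = (2 * int a + 1) * cell_side k j"
    "(2 * int a + 1) * cell_side k j + cell_side k j = (2 * int a + 2) * cell_side k j"
    by (simp_all add: algebra_simps)
  then show ?thesis
    using middle_row_notin[OF assms] corner_in_row_syndrome top_row_zero_iff[OF assms]
    by (auto simp add: step2_flip_def Let_def cB_def cC_def c_alpha_def c_beta_def c_gamma_def
        c_delta_def c_t_def int_hh_Suc opt_def symd_def)
qed

lemma step2_pair_row_syndrome:
  assumes "b < 2^j"
  shows "step2_pair k (hh k (Suc j)) (row_syndrome k j g)
      (2 * cell_side k j * int a, 2 * cell_side k j * int b) =
     opt (b = 0 \<and> jump g (2 * int a + 1) \<and> jump g (2 * int a + 2))
       {vert k ((2 * int a + 1) * cell_side k j) 0, vert k ((2 * int a + 2) * cell_side k j) 0}"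
proof -
  have "2 * cell_side k j * int a + cell_side k j = (2 * int a + 1) * cell_side k j"
    "(2 * int a + 1) * cell_side k j + cell_side k j = (2 * int a + 2) * cell_side k j"
    by (simp_all add: algebra_simps)
  then show ?thesis
    using middle_row_notin[OF assms] corner_in_row_syndrome top_row_zero_iff[OF assms]
    by (auto simp add: step2_pair_def Let_def cB_def cC_def c_alpha_def c_beta_def c_gamma_def
        c_delta_def int_hh_Suc opt_def)
qed

lemma step3_flip_subset_row_syndrome:
  assumes "b < 2^j" "T \<subseteq> row_syndrome k j g"
  shows "step3_flip k (hh k (Suc j)) T (2 * cell_side k j * int a, 2 * cell_side k j * int b) =
     opt (b = 0 \<and> vert k ((2 * int a + 1) * cell_side k j) 0 \<in> T)
       (hpath k ((2 * int a) * cell_side k j, 0) (hh k (Suc j)))"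
proof -
  have corners: "2 * cell_side k j * int a = (2 * int a) * cell_side k j"
    "(2 * int a) * cell_side k j + cell_side k j = (2 * int a + 1) * cell_side k j"
    by (simp_all add: algebra_simps)
  have "vert k z (2 * cell_side k j * int b - cell_side k j) \<notin> T" for z
    using middle_row_notin[OF assms(1)] assms(2) by blast
  moreover have
    "b \<noteq> 0 \<Longrightarrow> vert k ((2 * int a + 1) * cell_side k j) (2 * cell_side k j * int b) \<notin> T"
    using corner_in_row_syndrome top_row_zero_iff[OF assms(1)] assms(2) by blast
  ultimately show ?thesis
    by (cases "b = 0") (auto simp add: step3_flip_def Let_def cA_def c_alpha_def c_beta_def
        c_gamma_def c_delta_def c_t_def c_l_def c_b_def int_hh_Suc opt_def symd_def corners)
qed

lemma step2_residue_subset: "step2_residue k j g \<subseteq> row_syndrome k j g"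
  unfolding step2_residue_def by blast

lemma mem_step2_residue:
  assumes "a < 2^j"
  shows "vert k ((2 * int a + 1) * cell_side k j) 0 \<in> step2_residue k j g \<longleftrightarrow>
    jump g (2 * int a + 1) \<and> \<not> jump g (2 * int a + 2)"
proof -
  let ?v = "vert k ((2 * int a + 1) * cell_side k j) 0"
  have odd_mod: "(2 * int a' + 1) mod 2^Suc j = 2 * int a' + 1" if "a' < 2^j" for a'
    using corner_index_bounds[OF that] by (intro mod_pos_pos_trivial) simp_all
  have in_pair_iff: "?v \<in> step2_pair k (hh k (Suc j)) (row_syndrome k j g) bl \<longleftrightarrow>
      bl = (2 * cell_side k j * int a, 0) \<and> jump g (2 * int a + 1) \<and> jump g (2 * int a + 2)"
    if bl_in: "bl \<in> blocks k (Suc j)" for bl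
  proof -
    obtain a' b' where bl: "bl = (2 * cell_side k j * int a', 2 * cell_side k j * int b')"
      "a' < 2^j" "b' < 2^j"
      using blocksE[OF bl_in] .
    have "?v \<noteq> vert k ((2 * int a' + 2) * cell_side k j) 0"
      unfolding vert_corner_eq_iff
      using even_mod_exp_div_exp_iff[of "2 * int a + 1" "Suc j" 0]
        even_mod_exp_div_exp_iff[of "2 * int a' + 2" "Suc j" 0] by auto
    moreover have "?v = vert k ((2 * int a' + 1) * cell_side k j) 0 \<longleftrightarrow> a' = a"
      unfolding vert_corner_eq_iff odd_mod[OF assms] odd_mod[OF bl(2)] by auto
    ultimately show ?thesis
      unfolding bl(1) step2_pair_row_syndrome[OF bl(3)] opt_def
      using cell_side_pos[of k j] by auto
  qed
  have "?v \<in> row_syndrome k j g \<longleftrightarrow> jump g (2 * int a + 1)"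
    using corner_in_row_syndrome by simp
  then show ?thesis
    unfolding step2_residue_def using in_pair_iff block_in_blocks[OF assms] by blast
qed

lemma step2_flip_row_edges:
  assumes "bl \<in> blocks k (Suc j)"
  shows "step2_flip k (hh k (Suc j)) (row_syndrome k j g) bl =
    row_edges k (\<lambda>x. row_block k j x = bl \<and> odd (x div cell_side k j) \<and>
      jump g (x div cell_side k j) \<and> jump g (x div cell_side k j + 1))"
proof -
  obtain a b where bl: "bl = (2 * cell_side k j * int a, 2 * cell_side k j * int b)"
    "a < 2^j" "b < 2^j"
    using blocksE[OF assms] .
  have c: "0 \<le> 2 * int a + 1" "2 * int a + 1 < 2^Suc j"
    using corner_index_bounds[OF bl(2)] by linarith+
  have parity: "c div 2 = int a \<and> odd c \<longleftrightarrow> c = 2 * int a + 1" for c :: int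
    by presburger
  have "step2_flip k (hh k (Suc j)) (row_syndrome k j g) bl =
      row_edges k (\<lambda>x. (b = 0 \<and> jump g (2 * int a + 1) \<and> jump g (2 * int a + 2)) \<and>
        x div cell_side k j = 2 * int a + 1)"
    unfolding bl(1) step2_flip_row_syndrome[OF bl(3)] hpath_cell_row_edges[OF c] opt_row_edges ..
  also have "\<dots> = row_edges k (\<lambda>x. row_block k j x = bl \<and> odd (x div cell_side k j) \<and>
      jump g (x div cell_side k j) \<and> jump g (x div cell_side k j + 1))"
    unfolding bl(1) row_block_eq_iff
    by (rule row_edges_cong) (metis parity add.assoc one_add_one)
  finally show ?thesis .
qed

lemma step3_flip_row_edges:
  assumes "bl \<in> blocks k (Suc j)"
  shows "step3_flip k (hh k (Suc j)) (step2_residue k j g) bl =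
    row_edges k (\<lambda>x. row_block k j x = bl \<and> even (x div cell_side k j) \<and>
      jump g (x div cell_side k j + 1) \<and> \<not> jump g (x div cell_side k j + 2))"
proof -
  obtain a b where bl: "bl = (2 * cell_side k j * int a, 2 * cell_side k j * int b)"
    "a < 2^j" "b < 2^j"
    using blocksE[OF assms] .
  have c: "0 \<le> 2 * int a" "2 * int a < 2^Suc j"
    using corner_index_bounds[OF bl(2)] by linarith+
  have parity: "c div 2 = int a \<and> even c \<longleftrightarrow> c = 2 * int a" for c :: int
    by presburger
  have "step3_flip k (hh k (Suc j)) (step2_residue k j g) bl =
      row_edges k (\<lambda>x. (b = 0 \<and> jump g (2 * int a + 1) \<and> \<not> jump g (2 * int a + 2)) \<and>
        x div cell_side k j = 2 * int a)"
    unfolding bl(1) step3_flip_subset_row_syndrome[OF bl(3) step2_residue_subset]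
      hpath_cell_row_edges[OF c] mem_step2_residue[OF bl(2)] opt_row_edges ..
  also have "\<dots> = row_edges k (\<lambda>x. row_block k j x = bl \<and> even (x div cell_side k j) \<and>
      jump g (x div cell_side k j + 1) \<and> \<not> jump g (x div cell_side k j + 2))"
    unfolding bl(1) row_block_eq_iff
    by (rule row_edges_cong) (metis parity)
  finally show ?thesis .
qed

lemma reduce_row_syndrome:
  "reduce k (Suc j) (row_syndrome k j g) = row_edges k (\<lambda>x.
     (odd (x div cell_side k j) \<and>
        jump g (x div cell_side k j) \<and> jump g (x div cell_side k j + 1)) \<noteq>
     (even (x div cell_side k j) \<and>
        jump g (x div cell_side k j + 1) \<and> \<not> jump g (x div cell_side k j + 2)))"
proof -
  have step1: "xfam (blocks k (Suc j)) (step1_flip k (hh k (Suc j)) (row_syndrome k j g)) = {}"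
    by (rule xfam_empty) (metis blocksE step1_flip_row_syndrome)
  have "step1_pair k (hh k (Suc j)) (row_syndrome k j g) bl = {}" if "bl \<in> blocks k (Suc j)" for bl
    using that
    by (metis blocksE step1_pair_row_syndrome)
  then have unpaired: "row_syndrome k j g -
      (\<Union>bl\<in>blocks k (Suc j). step1_pair k (hh k (Suc j)) (row_syndrome k j g) bl) =
      row_syndrome k j g"
    by simp
  have step2: "xfam (blocks k (Suc j)) (step2_flip k (hh k (Suc j)) (row_syndrome k j g)) =
      row_edges k (\<lambda>x. odd (x div cell_side k j) \<and>
        jump g (x div cell_side k j) \<and> jump g (x div cell_side k j + 1))"
    by (rule xfam_row_edges[where part = "row_block k j"])
      (simp_all add: step2_flip_row_edges row_block_in_blocks)
  have step3: "xfam (blocks k (Suc j)) (step3_flip k (hh k (Suc j)) (step2_residue k j g)) =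
      row_edges k (\<lambda>x. even (x div cell_side k j) \<and>
        jump g (x div cell_side k j + 1) \<and> \<not> jump g (x div cell_side k j + 2))"
    by (rule xfam_row_edges[where part = "row_block k j"])
      (simp_all add: step3_flip_row_edges row_block_in_blocks)
  show ?thesis
    unfolding reduce_def Let_def step1 unpaired step2_residue_def[symmetric] symd_empty
      step2 step3 symd_row_edges ..
qed

lemma reduce_row_error:
  "symd (row_edges k (\<lambda>x. g (x div cell_side k j))) (reduce k (Suc j) (row_syndrome k j g)) =
    row_edges k (\<lambda>x. coarsen g (x div 2^(k - j)))"
proof -
  have "x div 2^(k - j) = x div cell_side k j div 2" for x :: int
    using zdiv_zmult2_eq[of 2 x "cell_side k j"]
    unfolding two_cell_side[symmetric] by (simp add: mult.commute)
  then show ?thesis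
    unfolding reduce_row_syndrome symd_row_edges by (simp only: coarsen_eq_flipped)
qed

lemma row_syndrome_empty_const: "row_syndrome k j g = {} \<Longrightarrow> g c = g 0"
  using jump_free_const corner_in_row_syndrome[of _ 0] by auto

lemma decode_from_row_syndrome:
  assumes "row_syndrome k j g \<noteq> {}"
  shows "decode_from k (Suc j) (row_syndrome k j g) acc =
    decode_from k j (syndrome k (row_edges k (\<lambda>x. coarsen g (x div 2^(k - j)))))
      (symd acc (reduce k (Suc j) (row_syndrome k j g)))"
proof -
  obtain Q where reduce_row: "reduce k (Suc j) (row_syndrome k j g) = row_edges k Q"
    using reduce_row_syndrome by blast
  have "symd (row_syndrome k j g) (syndrome k (row_edges k Q)) =
      syndrome k (symd (row_edges k (\<lambda>x. g (x div cell_side k j))) (row_edges k Q))"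
    unfolding row_syndrome_def syndrome_symd_row_edges[OF level_pos] symd_row_edges ..
  then have "symd (row_syndrome k j g) (syndrome k (reduce k (Suc j) (row_syndrome k j g))) =
      syndrome k (row_edges k (\<lambda>x. coarsen g (x div 2^(k - j))))"
    unfolding reduce_row[symmetric] reduce_row_error .
  then show ?thesis using assms by (simp add: Let_def)
qed

end

end

lemma coarsen_periodic:
  assumes "\<And>c. g c = g (c mod 2^Suc j)"
  shows "coarsen g c = coarsen g (c mod 2^j)"
proof -
  have "g (2 * (c mod 2^j) + r) = g (2 * c + r)" for r
    using assms mod_double_cong[of "c mod 2^j" j c r] by (metis mod_mod_trivial)
  from this[of 0] this[of 1] this[of 2] show ?thesis
    unfolding coarsen_def by simp
qed

lemma decode_from_row_error:
  assumes "j \<le> k" "k \<ge> 1" "\<And>c. g c = g (c mod 2^j)"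
    and "symd e acc = row_edges k (\<lambda>x. g (x div 2^(k - j)))"
  shows "symd e (decode_from k j (syndrome k (row_edges k (\<lambda>x. g (x div 2^(k - j))))) acc) =
    row_edges k (\<lambda>_. coarse_value j g)"
  using assms
proof (induction j arbitrary: g acc)
  case 0
  have "row_edges k (\<lambda>x. g (x div 2^k)) = row_edges k (\<lambda>_. g 0)"
    by (rule row_edges_cong) simp
  then show ?case using 0 by simp
next
  case (Suc j)
  have level: "Suc j \<le> k" and periodic: "\<And>c. g c = g (c mod 2^Suc j)"
    using Suc.prems by auto
  have stretch: "(\<lambda>x. g (x div 2^(k - Suc j))) = (\<lambda>x. g (x div cell_side k j))"
    unfolding cell_side_def ..
  show ?case
  proof (cases "row_syndrome k j g = {}")
    case True
    then have "g = (\<lambda>_. g 0)"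
      using row_syndrome_empty_const[where g = g, OF level periodic] by blast
    then have "coarse_value (Suc j) g = g 0"
      "row_edges k (\<lambda>x. g (x div 2^(k - Suc j))) = row_edges k (\<lambda>_. g 0)"
      using coarse_value_const by metis+
    then show ?thesis
      using True Suc.prems(4) unfolding stretch row_syndrome_def[symmetric] by simp
  next
    case False
    let ?f = "reduce k (Suc j) (row_syndrome k j g)"
    have "symd e (symd acc ?f) = row_edges k (\<lambda>x. coarsen g (x div 2^(k - j)))"
      using Suc.prems(4) reduce_row_error[where g = g, OF level periodic]
      unfolding stretch by (simp add: symd_assoc[symmetric])
    from Suc.IH[OF _ Suc.prems(2) coarsen_periodic[where g = g, OF periodic] this] level
    show ?thesis
      unfolding stretch row_syndrome_def[symmetric]
        decode_from_row_syndrome[where g = g, OF level periodic False]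
      by simp
  qed
qed

section \<open>The full row is not a sum of faces\<close>

lemma finite_edges: "finite (edges k)"
proof -
  have "edges k \<subseteq> ({0..<2^k} \<times> {0..<2^k}) \<times> UNIV"
    unfolding edges_def verts_def by auto
  then show ?thesis by (rule finite_subset) simp
qed

lemma finite_verts: "finite (verts k)"
proof -
  have "verts k \<subseteq> {0..<2^k} \<times> {0..<2^k}" unfolding verts_def by auto
  then show ?thesis by (rule finite_subset) simp
qed

lemma row_edges_subset_edges: "row_edges k P \<subseteq> edges k"
  unfolding row_edges_def edges_def verts_def by auto

(* The horizontal edges crossing the line x = 1/2: a face crosses it twice or not at all. *)
definition cut_edges :: "edge set" where
  "cut_edges = {((0, y), False) | y. True}"

lemma even_card_face_cut_edges:
  assumes "k \<ge> 1" "v \<in> verts k"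
  shows "even (card (face k v \<inter> edges k \<inter> cut_edges))"
proof -
  obtain x y where v: "v = (x, y)" "0 \<le> x" "x < 2^k" "0 \<le> y" "y < 2^k"
    using assms(2) unfolding verts_def by auto
  show ?thesis
  proof (cases "x = 0")
    case True
    have "(y + 1) mod 2^k \<noteq> y"
      using mod_succ_eq_iff[OF v(4,5) v(4,5)] pred_mod_neq[OF two_power_ge_2[OF assms(1)] v(4,5)]
      by auto
    moreover have
      "face k v \<inter> edges k \<inter> cut_edges = {((0, y), False), ((0, (y + 1) mod 2^k), False)}"
      unfolding v(1) face_def vert_def edges_def cut_edges_def verts_def using True v by auto
    ultimately show ?thesis by simp
  next
    case False
    then have "face k v \<inter> edges k \<inter> cut_edges = {}"
      unfolding v(1) face_def vert_def cut_edges_def using v by auto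
    then show ?thesis by simp
  qed
qed

lemma even_card_sum_of_faces_cut_edges:
  assumes "k \<ge> 1" "sum_of_faces k c"
  shows "even (card (c \<inter> cut_edges))"
proof -
  obtain F where F: "F \<subseteq> verts k" "c = {ed \<in> edges k. odd (card {v \<in> F. ed \<in> face k v})}"
    using assms(2) unfolding sum_of_faces_def by blast
  have "finite F"
    using F(1) finite_verts by (rule finite_subset)
  have "c \<inter> cut_edges = xfam F (face k) \<inter> (edges k \<inter> cut_edges)"
    unfolding F(2) xfam_def by blast
  also have "\<dots> = xfam F (\<lambda>v. face k v \<inter> edges k \<inter> cut_edges)"
    unfolding xfam_Int Int_assoc ..
  moreover have "even (card (xfam F (\<lambda>v. face k v \<inter> edges k \<inter> cut_edges)))"
    using F(1) even_card_face_cut_edges[OF assms(1)]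
    by (intro even_card_xfam[OF \<open>finite F\<close>]) (auto simp: finite_edges)
  ultimately show ?thesis by simp
qed

lemma full_row_not_sum_of_faces:
  assumes "k \<ge> 1"
  shows "\<not> sum_of_faces k (row_edges k (\<lambda>_. True))"
proof
  assume "sum_of_faces k (row_edges k (\<lambda>_. True))"
  moreover have "row_edges k (\<lambda>_. True) \<inter> cut_edges = {((0, 0), False)}"
    unfolding row_edges_def cut_edges_def by auto
  ultimately show False
    using even_card_sum_of_faces_cut_edges[OF assms] by fastforce
qed

lemma decoded_correctly_empty: "decoded_correctly k {}"
proof -
  have "syndrome k {} = {}" unfolding syndrome_def by simp
  moreover have "decode_from k j {} {} = {}" for j by (cases j) simp_all
  moreover have "sum_of_faces k {}"
    unfolding sum_of_faces_def by (intro exI[of _ "{}"]) simp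
  ultimately show ?thesis
    unfolding decoded_correctly_def decoder_def by (simp add: symd_def)
qed

lemma omega_less_card:
  assumes "e \<subseteq> edges k" "\<not> decoded_correctly k e"
  shows "omega k < card e"
proof -
  let ?Q = "\<lambda>w. \<forall>e. e \<subseteq> edges k \<and> card e \<le> w \<longrightarrow> decoded_correctly k e"
  have "?Q 0"
  proof (intro allI impI)
    fix e' assume "e' \<subseteq> edges k \<and> card e' \<le> 0"
    then have "e' = {}" using finite_edges finite_subset by fastforce
    then show "decoded_correctly k e'" using decoded_correctly_empty by simp
  qed
  have bound: "w < card e" if "?Q w" for w
  proof (rule ccontr)
    assume "\<not> w < card e"
    then show False using that assms by simp
  qed
  have "?Q (Greatest ?Q)"
    by (rule GreatestI_nat[of ?Q 0 "card e"]) (use \<open>?Q 0\<close> bound less_imp_le in auto)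
  then show ?thesis unfolding omega_def by (rule bound)
qed

lemma card_row_edges_mem_mod:
  assumes "finite P"
  shows "card (row_edges k (mem_mod k P)) \<le> card P"
proof -
  have "row_edges k (mem_mod k P) \<subseteq> (\<lambda>p. ((p mod 2^k, 0), False)) ` P"
    unfolding row_edges_def mem_mod_def by force
  then show ?thesis
    using assms by (meson card_image_le card_mono finite_imageI le_trans)
qed

theorem proposition3:
  fixes k :: nat
  assumes "k \<ge> 1"
  shows "omega k \<le> u k - 1"
proof -
  obtain P where P: "finite P" "card P \<le> u k" "coarse_value k (mem_mod k P)"
    using small_majority_set[OF assms] .
  let ?e = "row_edges k (mem_mod k P)"
  have "mem_mod k P c = mem_mod k P (c mod 2^k)" for c
    unfolding mem_mod_def by simp
  then have "symd ?e (decoder k ?e) = row_edges k (\<lambda>_. coarse_value k (mem_mod k P))"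
    unfolding decoder_def using decode_from_row_error[OF le_refl assms, of "mem_mod k P" ?e "{}"]
    by simp
  then have "\<not> decoded_correctly k ?e"
    using P(3) full_row_not_sum_of_faces[OF assms] unfolding decoded_correctly_def by simp
  then have "omega k < card ?e"
    using omega_less_card row_edges_subset_edges by blast
  then show ?thesis
    using card_row_edges_mem_mod[OF P(1), of k] P(2) by linarith
qed

end
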